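(* Let $(X,d,\preccurlyeq)$ be a preordered $s$-regular $b$-metric space and let $T,S,\tilde T,\tilde S:X\to X$. Suppose there are mappings $H_t,K_t:X\to X$, $0\le t\le n$, such that $$T=H_0\preccurlyeq H_1\succcurlyeq H_2\preccurlyeq\cdots\succcurlyeq H_n=\tilde T,\qquad S=K_0\succcurlyeq K_1\preccurlyeq K_2\succcurlyeq\cdots\preccurlyeq K_n=\tilde S.$$ Suppose the mappings $H_t$, $1\le t\le n$, are isotone, $x_0\in\mathrm{Coin}(T,S)$, and: (i) for each odd $t$, $1\le t\le n$: $K_t$ covers $H_t$ from above, and every chain $C\in\mathcal{C}^*(H_t,K_t,\preccurlyeq)$ has an upper bound $w\in X$ satisfying $w\succcurlyeq H_t(w)$ for which there exists $z\in X$ with $K_t^i(z)\succcurlyeq K_t(w)\succcurlyeq H_t(w)$ for all $i\in\mathbb{N}$ and $d(H_t^i(w),K_t^i(z))\to 0$ as $i\to\infty$; (ii) for each even $t$, $1\le t\le n$: $K_t$ covers $H_t$, and every chain $C\in\mathcal{C}(H_t,K_t,\preccurlyeq)$ has a lower bound $w'\in X$ satisfying $w'\preccurlyeq H_t(w')$ for which there exists $z'\in X$ with $K_t^i(z')\preccurlyeq K_t(w')\preccurlyeq H_t(w')$ for all $i\in\mathbb{N}$ and $d(H_t^i(w'),K_t^i(z'))\to 0$ as $i\to\infty$. Then there exists a fence $x_0\preccurlyeq x_1\succcurlyeq x_2\preccurlyeq\cdots\succcurlyeq x_n$ such that for each odd $t$, $x_t\in\mathrm{Coin}(H_t,K_t)\cap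 O^*_X(x_{t-1})$ and $x_t$ is a maximal element of that set, and for each even $t$, $x_t\in\mathrm{Coin}(H_t,K_t)\cap O_X(x_{t-1})$ and $x_t$ is a minimal element of that set.
   Context: A $b$-metric space with coefficient $s\ge 1$ is a nonempty set $X$ with $d:X\times X\to[0,\infty)$ such that for all $x,y,z$: $d(x,y)=0$ iff $x=y$; $d(x,y)=d(y,x)$; $d(x,y)\le s[d(x,z)+d(z,y)]$. A preorder is a reflexive transitive relation $\preccurlyeq$; $x\succcurlyeq y$ means $y\preccurlyeq x$; $x\prec y$ means $x\preccurlyeq y$ and $x\ne y$. A preordered $s$-regular $b$-metric space $(X,d,\preccurlyeq)$ is a $b$-metric space with coefficient $s$ with a preorder such that $x\preccurlyeq y\preccurlyeq z$ implies $\max\{d(x,y),d(y,z)\}\le s^2d(x,z)$. For maps $F,G$, $F\preccurlyeq G$ means $F(x)\preccurlyeq G(x)$ for all $x$. A chain is a subset any two elements of which are comparable. A map $T$ is isotone if $x\preccurlyeq y$ implies $T(x)\preccurlyeq T(y)$; $T^i$ is the $i$-th iterate. $O_X(x_0)=\{x:x\preccurlyeq x_0\}$, $O^*_X(x_0)=\{x:x\succcurlyeq x_0\}$, $\mathrm{Coin}(T,S)=\{x:T(x)=S(x)\}$. $S$ covers $T$ if for every $x$ with $T(x)\preccurlyeq S(x)$ there is $y\preccurlyeq x$ with $S(y)=T(x)$; $S$ covers $T$ from above if for every $x$ with $T(x)\succcurlyeq S(x)$ there is $y\succcurlyeq x$ with $S(y)=T(x)$. $\mathcal{C}(T,S,\preccurlyeq)$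 is the set of chains $C$ such that for all $x,y\in C$: $T(x)\preccurlyeq S(x)$; $x\prec y$ implies $S(x)\preccurlyeq T(y)$; $S(C)\subset T(X)$. $\mathcal{C}^*(T,S,\preccurlyeq)$ is the set of chains $C$ such that for all $x,y\in C$: $T(x)\succcurlyeq S(x)$; $x\prec y$ implies $T(x)\preccurlyeq S(y)$; $S(C)\subset T(X)$. Upper/lower bounds of $C$ are with respect to $\preccurlyeq$. A minimal (maximal) element of $A$ is $w\in A$ with no $u\in A$ such that $u\prec w$ ($w\prec u$). A fence is a finite sequence with alternating relations as displayed. *)

theory Defs
  imports Complex_Main
begin

definition b_metric :: "real \<Rightarrow> ('a \<Rightarrow> 'a \<Rightarrow> real) \<Rightarrow> bool" where
  "b_metric s d \<longleftrightarrow> s \<ge> 1 \<and> (\<forall>x y. d x y \<ge> 0) \<and> (\<forall>x y. d x y = 0 \<longleftrightarrow> x = y)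
     \<and> (\<forall>x y. d x y = d y x) \<and> (\<forall>x y z. d x y \<le> s * (d x z + d z y))"

definition is_preorder :: "('a \<Rightarrow> 'a \<Rightarrow> bool) \<Rightarrow> bool" where
  "is_preorder le \<longleftrightarrow> (\<forall>x. le x x) \<and> (\<forall>x y z. le x y \<longrightarrow> le y z \<longrightarrow> le x z)"

definition preordered_s_regular_b_metric ::
  "real \<Rightarrow> ('a \<Rightarrow> 'a \<Rightarrow> real) \<Rightarrow> ('a \<Rightarrow> 'a \<Rightarrow> bool) \<Rightarrow> bool" where
  "preordered_s_regular_b_metric s d le \<longleftrightarrow> b_metric s d \<and> is_preorder le \<and>
     (\<forall>x y z. le x y \<longrightarrow> le y z \<longrightarrow> max (d x y) (d y z) \<le> s\<^sup>2 * d x z)"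

definition strict :: "('a \<Rightarrow> 'a \<Rightarrow> bool) \<Rightarrow> 'a \<Rightarrow> 'a \<Rightarrow> bool" where
  "strict le x y \<longleftrightarrow> le x y \<and> x \<noteq> y"

definition map_le :: "('a \<Rightarrow> 'a \<Rightarrow> bool) \<Rightarrow> ('a \<Rightarrow> 'a) \<Rightarrow> ('a \<Rightarrow> 'a) \<Rightarrow> bool" where
  "map_le le F G \<longleftrightarrow> (\<forall>x. le (F x) (G x))"

definition is_chain :: "('a \<Rightarrow> 'a \<Rightarrow> bool) \<Rightarrow> 'a set \<Rightarrow> bool" where
  "is_chain le C \<longleftrightarrow> (\<forall>x\<in>C. \<forall>y\<in>C. le x y \<or> le y x)"

definition isotone :: "('a \<Rightarrow> 'a \<Rightarrow> bool) \<Rightarrow> ('a \<Rightarrow> 'a) \<Rightarrow> bool" where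
  "isotone le T \<longleftrightarrow> (\<forall>x y. le x y \<longrightarrow> le (T x) (T y))"

definition O_below :: "('a \<Rightarrow> 'a \<Rightarrow> bool) \<Rightarrow> 'a \<Rightarrow> 'a set" where
  "O_below le x0 = {x. le x x0}"

definition O_above :: "('a \<Rightarrow> 'a \<Rightarrow> bool) \<Rightarrow> 'a \<Rightarrow> 'a set" where
  "O_above le x0 = {x. le x0 x}"

definition Coin :: "('a \<Rightarrow> 'b) \<Rightarrow> ('a \<Rightarrow> 'b) \<Rightarrow> 'a set" where
  "Coin T S = {x. T x = S x}"

definition covers :: "('a \<Rightarrow> 'a \<Rightarrow> bool) \<Rightarrow> ('a \<Rightarrow> 'a) \<Rightarrow> ('a \<Rightarrow> 'a) \<Rightarrow> bool" where
  "covers le S T \<longleftrightarrow> (\<forall>x. le (T x) (S x) \<longrightarrow> (\<exists>y. le y x \<and> S y = T x))"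

definition covers_above :: "('a \<Rightarrow> 'a \<Rightarrow> bool) \<Rightarrow> ('a \<Rightarrow> 'a) \<Rightarrow> ('a \<Rightarrow> 'a) \<Rightarrow> bool" where
  "covers_above le S T \<longleftrightarrow> (\<forall>x. le (S x) (T x) \<longrightarrow> (\<exists>y. le x y \<and> S y = T x))"

definition chains_C :: "('a \<Rightarrow> 'a) \<Rightarrow> ('a \<Rightarrow> 'a) \<Rightarrow> ('a \<Rightarrow> 'a \<Rightarrow> bool) \<Rightarrow> 'a set set" where
  "chains_C T S le = {C. is_chain le C \<and> (\<forall>x\<in>C. le (T x) (S x))
      \<and> (\<forall>x\<in>C. \<forall>y\<in>C. strict le x y \<longrightarrow> le (S x) (T y)) \<and> S ` C \<subseteq> range T}"

definition chains_Cstar :: "('a \<Rightarrow> 'a) \<Rightarrow> ('a \<Rightarrow> 'a) \<Rightarrow> ('a \<Rightarrow> 'a \<Rightarrow> bool) \<Rightarrow> 'a set set" where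
  "chains_Cstar T S le = {C. is_chain le C \<and> (\<forall>x\<in>C. le (S x) (T x))
      \<and> (\<forall>x\<in>C. \<forall>y\<in>C. strict le x y \<longrightarrow> le (T x) (S y)) \<and> S ` C \<subseteq> range T}"

definition is_maximal :: "('a \<Rightarrow> 'a \<Rightarrow> bool) \<Rightarrow> 'a \<Rightarrow> 'a set \<Rightarrow> bool" where
  "is_maximal le w A \<longleftrightarrow> w \<in> A \<and> \<not> (\<exists>u\<in>A. strict le w u)"

definition is_minimal :: "('a \<Rightarrow> 'a \<Rightarrow> bool) \<Rightarrow> 'a \<Rightarrow> 'a set \<Rightarrow> bool" where
  "is_minimal le w A \<longleftrightarrow> w \<in> A \<and> \<not> (\<exists>u\<in>A. strict le u w)"

end

theory Submission imports Defs begin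

text \<open>
  The fence is built one point at a time. For odd \<open>t\<close> one finds, by Zorn's lemma, a maximal
  coincidence point of \<open>H t\<close> and \<open>K t\<close> above the previous point \<open>p\<close>. Regularity makes the
  preorder antisymmetric, and it also shows that the upper bound \<open>w\<close> which the hypothesis
  provides for a chain of coincidence points is itself a coincidence point: along
  \<open>H\<^sup>i w \<preceq> H w \<preceq> K w \<preceq> K\<^sup>i z\<close> it gives \<open>d (H w) (K w) \<le> s\<^sup>4 d (H\<^sup>i w) (K\<^sup>i z) \<longrightarrow> 0\<close>.
  Since \<open>p\<close> is a coincidence point of \<open>H (t - 1)\<close> and \<open>K (t - 1)\<close>, the fence inequalities give
  \<open>K t p \<preceq> H t p\<close>, and covering from above turns this into a one-point chain above \<open>p\<close>, so
  there are coincidence points above \<open>p\<close> at all. Even steps are odd steps for the reversed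
  preorder.
\<close>

lemma preordered_s_regular_b_metric_antisym:
  assumes space: "preordered_s_regular_b_metric s d le" and "le x y" "le y x"
  shows "x = y"
proof -
  have "max (d x y) (d y x) \<le> s\<^sup>2 * d x x"
    using space \<open>le x y\<close> \<open>le y x\<close> unfolding preordered_s_regular_b_metric_def by blast
  moreover have "d x x = 0" "d x y \<ge> 0"
    using space unfolding preordered_s_regular_b_metric_def b_metric_def by auto
  ultimately have "d x y = 0" by simp
  then show ?thesis
    using space unfolding preordered_s_regular_b_metric_def b_metric_def by blast
qed

lemma preordered_s_regular_b_metric_converse:
  assumes "preordered_s_regular_b_metric s d le"
  shows "preordered_s_regular_b_metric s d (\<lambda>x y. le y x)"
proof -
  have "max (d x y) (d y z) \<le> s\<^sup>2 * d x z" if "le y x" "le z y" for x y z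
  proof -
    have "max (d z y) (d y x) \<le> s\<^sup>2 * d z x"
      using assms that unfolding preordered_s_regular_b_metric_def by blast
    moreover have "\<And>u v. d u v = d v u"
      using assms unfolding preordered_s_regular_b_metric_def b_metric_def by blast
    ultimately show ?thesis by (metis max.commute)
  qed
  then show ?thesis
    using assms unfolding preordered_s_regular_b_metric_def is_preorder_def by blast
qed

lemma isotone_converse: "isotone (\<lambda>x y. le y x) T \<longleftrightarrow> isotone le T"
  unfolding isotone_def by blast

lemma covers_above_converse: "covers_above (\<lambda>x y. le y x) S T \<longleftrightarrow> covers le S T"
  unfolding covers_above_def covers_def by blast

lemma chains_Cstar_converse: "chains_Cstar T S (\<lambda>x y. le y x) = chains_C T S le"
  unfolding chains_Cstar_def chains_C_def is_chain_def strict_def by blast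

lemma O_above_converse: "O_above (\<lambda>x y. le y x) x = O_below le x"
  unfolding O_above_def O_below_def ..

lemma is_maximal_converse: "is_maximal (\<lambda>x y. le y x) w A \<longleftrightarrow> is_minimal le w A"
  unfolding is_maximal_def is_minimal_def strict_def by blast

lemma isotone_funpow_le:
  assumes "is_preorder le" "isotone le H" "le (H w) w"
  shows "le ((H ^^ i) w) w"
proof (induction i)
  case 0
  then show ?case using \<open>is_preorder le\<close> unfolding is_preorder_def by simp
next
  case (Suc i)
  then have "le (H ((H ^^ i) w)) (H w)"
    using \<open>isotone le H\<close> unfolding isotone_def by blast
  then show ?case
    using \<open>le (H w) w\<close> \<open>is_preorder le\<close> unfolding is_preorder_def by auto
qed

lemma coincidence_of_iterates:
  assumes space: "preordered_s_regular_b_metric s d le" and iso: "isotone le H"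
    and Hw: "le (H w) w" and HKw: "le (H w) (K w)"
    and Kz: "\<And>i. i \<ge> 1 \<Longrightarrow> le (K w) ((K ^^ i) z)"
    and lim: "(\<lambda>i. d ((H ^^ i) w) ((K ^^ i) z)) \<longlonglongrightarrow> 0"
  shows "H w = K w"
proof -
  have preorder: "is_preorder le"
    and reg: "\<And>x y z. le x y \<Longrightarrow> le y z \<Longrightarrow> max (d x y) (d y z) \<le> s\<^sup>2 * d x z"
    and dnn: "\<And>x y. d x y \<ge> 0" and d0: "\<And>x y. d x y = 0 \<longleftrightarrow> x = y"
    using space unfolding preordered_s_regular_b_metric_def b_metric_def by blast+
  have trans: "\<And>x y z. le x y \<Longrightarrow> le y z \<Longrightarrow> le x z"
    using preorder unfolding is_preorder_def by blast
  have bound: "d (H w) (K w) \<le> s\<^sup>2 * (s\<^sup>2 * d ((H ^^ i) w) ((K ^^ i) z))" if "i \<ge> 1" for i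
  proof -
    obtain j where i: "i = Suc j" using \<open>i \<ge> 1\<close> by (cases i) auto
    have HiH: "le ((H ^^ i) w) (H w)"
      using isotone_funpow_le[OF preorder iso Hw, of j] iso unfolding i isotone_def by simp
    have "d (H w) (K w) \<le> s\<^sup>2 * d ((H ^^ i) w) (K w)"
      using reg[OF HiH HKw] by simp
    also have "\<dots> \<le> s\<^sup>2 * (s\<^sup>2 * d ((H ^^ i) w) ((K ^^ i) z))"
      using reg[OF trans[OF HiH HKw] Kz[OF that]] by (intro mult_left_mono) simp_all
    finally show ?thesis .
  qed
  have "(\<lambda>i. s\<^sup>2 * (s\<^sup>2 * d ((H ^^ i) w) ((K ^^ i) z))) \<longlonglongrightarrow> 0"
    by (intro tendsto_mult_right_zero lim)
  then have "d (H w) (K w) \<le> 0"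
    by (rule LIMSEQ_le_const) (use bound in blast)
  then show ?thesis using dnn[of "H w" "K w"] d0 by simp
qed

lemma chain_of_coincidences_in_chains_Cstar:
  assumes "is_preorder le" "isotone le H" "is_chain le C" "C \<subseteq> Coin H K"
  shows "C \<in> chains_Cstar H K le"
proof -
  have HK: "H x = K x" if "x \<in> C" for x
    using assms(4) that unfolding Coin_def by blast
  then have "K ` C \<subseteq> range H" by (metis image_subsetI rangeI)
  moreover have "le (H x) (K y)" if "x \<in> C" "y \<in> C" "le x y" for x y
    using \<open>isotone le H\<close> that HK[of y] unfolding isotone_def by metis
  ultimately show ?thesis
    using assms HK unfolding chains_Cstar_def strict_def is_preorder_def by auto
qed

lemma exists_maximal_coincidence_above_of_bounded_chains:
  assumes preorder: "is_preorder le" and antisym: "\<And>x y. le x y \<Longrightarrow> le y x \<Longrightarrow> x = y"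
    and iso: "isotone le H" and cov: "covers_above le K H"
    and bounded: "\<And>C. C \<in> chains_Cstar H K le \<Longrightarrow> \<exists>w\<in>Coin H K. \<forall>c\<in>C. le c w"
    and a: "le (K a) (H a)"
  shows "\<exists>x. le a x \<and> is_maximal le x (Coin H K \<inter> O_above le a)"
proof -
  let ?A = "Coin H K \<inter> O_above le a"
  have refl: "\<And>x. le x x" and trans: "\<And>x y z. le x y \<Longrightarrow> le y z \<Longrightarrow> le x z"
    using preorder unfolding is_preorder_def by blast+
  obtain y where y: "le a y" "K y = H a"
    using cov a unfolding covers_above_def by blast
  have "{y} \<in> chains_Cstar H K le"
    using y refl iso unfolding chains_Cstar_def is_chain_def strict_def isotone_def by auto
  then obtain w0 where "w0 \<in> ?A"
    using bounded y trans unfolding O_above_def by blast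
  have "partial_order_on ?A (relation_of le ?A)"
    using refl trans antisym
    unfolding partial_order_on_def preorder_on_def refl_on_def trans_def antisym_def relation_of_def
    by blast
  moreover have "\<exists>u\<in>?A. \<forall>c\<in>C. le c u" if C: "C \<in> Chains (relation_of le ?A)" for C
  proof (cases "C = {}")
    case True
    then show ?thesis using \<open>w0 \<in> ?A\<close> by blast
  next
    case False
    then obtain c where "c \<in> C" by blast
    have "C \<subseteq> ?A" "is_chain le C"
      using C unfolding Chains_def relation_of_def is_chain_def by blast+
    then obtain w where w: "w \<in> Coin H K" "\<forall>c\<in>C. le c w"
      using bounded chain_of_coincidences_in_chains_Cstar[OF preorder iso] by blast
    have "le a w"
      using \<open>c \<in> C\<close> \<open>C \<subseteq> ?A\<close> w trans unfolding O_above_def by blast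
    then show ?thesis using w unfolding O_above_def by blast
  qed
  ultimately obtain m where "m \<in> ?A" "\<forall>u\<in>?A. le m u \<longrightarrow> u = m"
    using predicate_Zorn by blast
  then show ?thesis unfolding is_maximal_def strict_def O_above_def by auto
qed

lemma exists_maximal_coincidence_above:
  assumes space: "preordered_s_regular_b_metric s d le"
    and iso: "isotone le H" and cov: "covers_above le K H"
    and chain: "\<And>C. C \<in> chains_Cstar H K le \<Longrightarrow>
        \<exists>w. (\<forall>c\<in>C. le c w) \<and> le (H w) w \<and>
          (\<exists>z. (\<forall>i\<ge>1. le (K w) ((K ^^ i) z) \<and> le (H w) (K w)) \<and>
               (\<lambda>i. d ((H ^^ i) w) ((K ^^ i) z)) \<longlonglongrightarrow> 0)"
    and a: "le (K a) (H a)"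
  shows "\<exists>x. le a x \<and> is_maximal le x (Coin H K \<inter> O_above le a)"
proof (rule exists_maximal_coincidence_above_of_bounded_chains[OF _ _ iso cov _ a])
  show "is_preorder le"
    using space unfolding preordered_s_regular_b_metric_def by blast
  show "\<And>x y. le x y \<Longrightarrow> le y x \<Longrightarrow> x = y"
    using preordered_s_regular_b_metric_antisym[OF space] by blast
  fix C assume "C \<in> chains_Cstar H K le"
  then obtain w z where bound: "\<forall>c\<in>C. le c w" and Hw: "le (H w) w"
    and Kz: "\<forall>i\<ge>1. le (K w) ((K ^^ i) z) \<and> le (H w) (K w)"
    and lim: "(\<lambda>i. d ((H ^^ i) w) ((K ^^ i) z)) \<longlonglongrightarrow> 0"
    using chain by blast
  have "H w = K w"
    by (rule coincidence_of_iterates[OF space iso Hw _ _ lim]) (use Kz in auto)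
  then show "\<exists>w\<in>Coin H K. \<forall>c\<in>C. le c w" using bound unfolding Coin_def by blast
qed

lemma exists_minimal_coincidence_below:
  assumes space: "preordered_s_regular_b_metric s d le"
    and iso: "isotone le H" and cov: "covers le K H"
    and chain: "\<And>C. C \<in> chains_C H K le \<Longrightarrow>
        \<exists>w'. (\<forall>c\<in>C. le w' c) \<and> le w' (H w') \<and>
          (\<exists>z'. (\<forall>i\<ge>1. le ((K ^^ i) z') (K w') \<and> le (K w') (H w')) \<and>
               (\<lambda>i. d ((H ^^ i) w') ((K ^^ i) z')) \<longlonglongrightarrow> 0)"
    and a: "le (H a) (K a)"
  shows "\<exists>x. le x a \<and> is_minimal le x (Coin H K \<inter> O_below le a)"
proof -
  have "\<exists>x. le x a \<and> is_maximal (\<lambda>x y. le y x) x (Coin H K \<inter> O_above (\<lambda>x y. le y x) a)"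
  proof (rule exists_maximal_coincidence_above[of s d "\<lambda>x y. le y x" H K a])
    show "preordered_s_regular_b_metric s d (\<lambda>x y. le y x)"
      using space by (rule preordered_s_regular_b_metric_converse)
    show "isotone (\<lambda>x y. le y x) H" using iso by (rule isotone_converse[THEN iffD2])
    show "covers_above (\<lambda>x y. le y x) K H" using cov by (simp only: covers_above_converse)
    show "le (H a) (K a)" by (rule a)
  next
    fix C assume "C \<in> chains_Cstar H K (\<lambda>x y. le y x)"
    then show "\<exists>w. (\<forall>c\<in>C. le w c) \<and> le w (H w) \<and>
          (\<exists>z. (\<forall>i\<ge>1. le ((K ^^ i) z) (K w) \<and> le (K w) (H w)) \<and>
               (\<lambda>i. d ((H ^^ i) w) ((K ^^ i) z)) \<longlonglongrightarrow> 0)"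
      using chain by (simp only: chains_Cstar_converse)
  qed
  then show ?thesis by (simp only: O_above_converse is_maximal_converse)
qed

lemma map_le_at_coincidence:
  assumes "is_preorder le" "map_le le G' G" "map_le le F F'" "G p = F p"
  shows "le (G' p) (F' p)"
  using assms unfolding map_le_def is_preorder_def by metis

lemma exists_sequence_by_steps:
  fixes Q :: "nat \<Rightarrow> 'a \<Rightarrow> bool" and P :: "nat \<Rightarrow> 'a \<Rightarrow> 'a \<Rightarrow> bool"
  assumes start: "Q 0 x0"
    and step: "\<And>t p. 1 \<le> t \<Longrightarrow> t \<le> n \<Longrightarrow> Q (t - 1) p \<Longrightarrow> \<exists>y. Q t y \<and> P t p y"
  shows "\<exists>x. x 0 = x0 \<and> (\<forall>t. 1 \<le> t \<and> t \<le> n \<longrightarrow> P t (x (t - 1)) (x t))"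
proof -
  define x where "x = rec_nat x0 (\<lambda>t p. SOME y. Q (Suc t) y \<and> P (Suc t) p y)"
  have x_Suc: "x (Suc t) = (SOME y. Q (Suc t) y \<and> P (Suc t) (x t) y)" for t
    by (simp add: x_def)
  have "Q t (x t) \<and> (1 \<le> t \<longrightarrow> P t (x (t - 1)) (x t))" if "t \<le> n" for t
    using that
  proof (induction t)
    case 0
    then show ?case using start by (simp add: x_def)
  next
    case (Suc t)
    then have "\<exists>y. Q (Suc t) y \<and> P (Suc t) (x t) y" using step[of "Suc t"] by simp
    then have "Q (Suc t) (x (Suc t)) \<and> P (Suc t) (x t) (x (Suc t))"
      unfolding x_Suc by (rule someI_ex)
    then show ?case by simp
  qed
  moreover have "x 0 = x0" by (simp add: x_def)
  ultimately show ?thesis by blast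
qed

theorem theorem2p4:
  fixes s :: real and d :: "'a \<Rightarrow> 'a \<Rightarrow> real" and le :: "'a \<Rightarrow> 'a \<Rightarrow> bool"
    and T S T' S' :: "'a \<Rightarrow> 'a" and H K :: "nat \<Rightarrow> 'a \<Rightarrow> 'a" and n :: nat and x0 :: 'a
  assumes space: "preordered_s_regular_b_metric s d le"
    and H0: "H 0 = T" and Hn: "H n = T'" and K0: "K 0 = S" and Kn: "K n = S'"
    and Hfence: "\<And>t. 1 \<le> t \<Longrightarrow> t \<le> n \<Longrightarrow>
        (if odd t then map_le le (H (t - 1)) (H t) else map_le le (H t) (H (t - 1)))"
    and Kfence: "\<And>t. 1 \<le> t \<Longrightarrow> t \<le> n \<Longrightarrow>
        (if odd t then map_le le (K t) (K (t - 1)) else map_le le (K (t - 1)) (K t))"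
    and iso: "\<And>t. 1 \<le> t \<Longrightarrow> t \<le> n \<Longrightarrow> isotone le (H t)"
    and x0: "x0 \<in> Coin T S"
    and odd_cov: "\<And>t. 1 \<le> t \<Longrightarrow> t \<le> n \<Longrightarrow> odd t \<Longrightarrow> covers_above le (K t) (H t)"
    and odd_chain: "\<And>t C. 1 \<le> t \<Longrightarrow> t \<le> n \<Longrightarrow> odd t \<Longrightarrow> C \<in> chains_Cstar (H t) (K t) le \<Longrightarrow>
        \<exists>w. (\<forall>c\<in>C. le c w) \<and> le (H t w) w \<and>
          (\<exists>z. (\<forall>i\<ge>1. le (K t w) ((K t ^^ i) z) \<and> le (H t w) (K t w)) \<and>
               (\<lambda>i. d ((H t ^^ i) w) ((K t ^^ i) z)) \<longlonglongrightarrow> 0)"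
    and even_cov: "\<And>t. 1 \<le> t \<Longrightarrow> t \<le> n \<Longrightarrow> even t \<Longrightarrow> covers le (K t) (H t)"
    and even_chain: "\<And>t C. 1 \<le> t \<Longrightarrow> t \<le> n \<Longrightarrow> even t \<Longrightarrow> C \<in> chains_C (H t) (K t) le \<Longrightarrow>
        \<exists>w'. (\<forall>c\<in>C. le w' c) \<and> le w' (H t w') \<and>
          (\<exists>z'. (\<forall>i\<ge>1. le ((K t ^^ i) z') (K t w') \<and> le (K t w') (H t w')) \<and>
               (\<lambda>i. d ((H t ^^ i) w') ((K t ^^ i) z')) \<longlonglongrightarrow> 0)"
  shows "\<exists>x :: nat \<Rightarrow> 'a. x 0 = x0 \<and>
     (\<forall>t. 1 \<le> t \<and> t \<le> n \<longrightarrow>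
        (if odd t then le (x (t - 1)) (x t) \<and>
              is_maximal le (x t) (Coin (H t) (K t) \<inter> O_above le (x (t - 1)))
         else le (x t) (x (t - 1)) \<and>
              is_minimal le (x t) (Coin (H t) (K t) \<inter> O_below le (x (t - 1)))))"
proof (rule exists_sequence_by_steps[where Q = "\<lambda>t y. y \<in> Coin (H t) (K t)"])
  show "x0 \<in> Coin (H 0) (K 0)" using x0 H0 K0 by simp
  have preorder: "is_preorder le"
    using space unfolding preordered_s_regular_b_metric_def by blast
  fix t p assume t: "1 \<le> t" "t \<le> n" and p: "p \<in> Coin (H (t - 1)) (K (t - 1))"
  show "\<exists>y. y \<in> Coin (H t) (K t) \<and> (if odd t then le p y \<and>
              is_maximal le y (Coin (H t) (K t) \<inter> O_above le p)
         else le y p \<and> is_minimal le y (Coin (H t) (K t) \<inter> O_below le p))"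
  proof (cases "odd t")
    case True
    have "le (K t p) (H t p)"
      by (rule map_le_at_coincidence[OF preorder, where G = "K (t - 1)" and F = "H (t - 1)"])
        (use Hfence[OF t] Kfence[OF t] True p in \<open>simp_all add: Coin_def\<close>)
    then show ?thesis
      using exists_maximal_coincidence_above[OF space iso[OF t] odd_cov[OF t True] odd_chain[OF t True]]
        True unfolding is_maximal_def by auto
  next
    case False
    then have "even t" by simp
    have "le (H t p) (K t p)"
      by (rule map_le_at_coincidence[OF preorder, where G = "H (t - 1)" and F = "K (t - 1)"])
        (use Hfence[OF t] Kfence[OF t] False p in \<open>simp_all add: Coin_def\<close>)
    then show ?thesis
      using exists_minimal_coincidence_below[OF space iso[OF t] even_cov[OF t \<open>even t\<close>] even_chain[OF t \<open>even t\<close>]]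
        False unfolding is_minimal_def by auto
  qed
qed

end
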